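(* Let $G$ be a finite simple graph and $d,M$ positive integers. Suppose $\xi(G)\le d$ and $G$ contains $M$ pairwise vertex-disjoint cliques of size $d$. Then $\Delta_{Md}\le\widehat{G}\otimes\mathcal{C}_d$.
   Context: The orthogonal rank $\xi(G)$ is the smallest $d$ such that there are unit vectors $(u_g)_{g\in V(G)}$ in $\mathbb{C}^d$ with $\langle u_g|u_{g'}\rangle=0$ whenever $g,g'$ are adjacent. A noncommutative graph is a subspace $S\subseteq B(\mathcal{H})$ ($\mathcal{H}$ finite-dimensional) with $I\in S$, $S^*=S$. A cohomomorphism from $T\subseteq B(\mathcal{K})$ to $S\subseteq B(\mathcal{H})$ is a finite family of linear maps $E_i:\mathcal{K}\to\mathcal{H}$ with $\sum_iE_i^*E_i=I$ and $E_i^*SE_j\subseteq T$ for all $i,j$; $T\le S$ if one exists. $S\otimes T=\operatorname{span}\{A\otimes B:A\in S,B\in T\}$. $\widehat{G}=\operatorname{span}\{|x\rangle\langle x'|:x,x'\in V(G),\ x=x'\text{ or }x\sim x'\}\subseteq B(\mathbb{C}^{V(G)})$; $\mathcal{C}_d=\mathbb{C}I\subseteq B(\mathbb{C}^d)$; $\Delta_n\subseteq B(\mathbb{C}^n)$ is the subspace of operators diagonal in the standard basis (the noncommutative graph of the edgeless graph on $n$ vertices). *)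

theory Defs
  imports "Jordan_Normal_Form.Schur_Decomposition"
begin

text \<open>Finite simple graphs are given by a vertex count n (vertices 0..n-1)
  and a symmetric irreflexive adjacency relation E.\<close>

definition simple_graph :: "nat \<Rightarrow> (nat \<Rightarrow> nat \<Rightarrow> bool) \<Rightarrow> bool" where
  "simple_graph n E \<longleftrightarrow> (\<forall>x<n. \<forall>y<n. E x y \<longleftrightarrow> E y x) \<and> (\<forall>x<n. \<not> E x x)"

definition cinner :: "complex vec \<Rightarrow> complex vec \<Rightarrow> complex" where
  "cinner u v = (\<Sum>i<dim_vec u. cnj (u $ i) * v $ i)"

definition orth_rep :: "nat \<Rightarrow> (nat \<Rightarrow> nat \<Rightarrow> bool) \<Rightarrow> nat \<Rightarrow> (nat \<Rightarrow> complex vec) \<Rightarrow> bool" where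
  "orth_rep n E d u \<longleftrightarrow>
     (\<forall>x<n. u x \<in> carrier_vec d \<and> cinner (u x) (u x) = 1) \<and>
     (\<forall>x<n. \<forall>y<n. E x y \<longrightarrow> cinner (u x) (u y) = 0)"

definition orth_rank :: "nat \<Rightarrow> (nat \<Rightarrow> nat \<Rightarrow> bool) \<Rightarrow> nat" where
  "orth_rank n E = (LEAST d. \<exists>u. orth_rep n E d u)"

definition mspan :: "nat \<Rightarrow> complex mat set \<Rightarrow> complex mat set" where
  "mspan N X = {foldr (\<lambda>(c, A) acc. c \<cdot>\<^sub>m A + acc) cs (0\<^sub>m N N) | cs.
                  \<forall>(c, A) \<in> set cs. A \<in> X \<and> A \<in> carrier_mat N N}"

definition kron :: "complex mat \<Rightarrow> complex mat \<Rightarrow> complex mat" where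
  "kron A B = mat (dim_row A * dim_row B) (dim_col A * dim_col B)
     (\<lambda>(i, j). A $$ (i div dim_row B, j div dim_col B) * B $$ (i mod dim_row B, j mod dim_col B))"

definition ncg_tensor :: "nat \<Rightarrow> nat \<Rightarrow> complex mat set \<Rightarrow> complex mat set \<Rightarrow> complex mat set" where
  "ncg_tensor n m S T = mspan (n * m) {kron A B | A B. A \<in> S \<and> B \<in> T}"

definition mat_unit :: "nat \<Rightarrow> nat \<Rightarrow> nat \<Rightarrow> complex mat" where
  "mat_unit n i j = mat n n (\<lambda>(a, b). if a = i \<and> b = j then 1 else 0)"

definition graph_ncg :: "nat \<Rightarrow> (nat \<Rightarrow> nat \<Rightarrow> bool) \<Rightarrow> complex mat set" where
  "graph_ncg n E = mspan n {mat_unit n i j | i j. i < n \<and> j < n \<and> (i = j \<or> E i j)}"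

definition scalar_ncg :: "nat \<Rightarrow> complex mat set" where
  "scalar_ncg d = mspan d {1\<^sub>m d}"

definition diag_ncg :: "nat \<Rightarrow> complex mat set" where
  "diag_ncg N = {A \<in> carrier_mat N N. \<forall>i<N. \<forall>j<N. i \<noteq> j \<longrightarrow> A $$ (i, j) = 0}"

text \<open>T \<le> S for T \<subseteq> B(C^k), S \<subseteq> B(C^h): there is a cohomomorphism from T to S,
  i.e. finitely many E_i : C^k \<rightarrow> C^h with \<Sum> E_i* E_i = I and E_i* S E_j \<subseteq> T.\<close>
definition ncg_le :: "nat \<Rightarrow> complex mat set \<Rightarrow> nat \<Rightarrow> complex mat set \<Rightarrow> bool" where
  "ncg_le k T h S \<longleftrightarrow> (\<exists>Es :: complex mat list.
     (\<forall>F \<in> set Es. F \<in> carrier_mat h k) \<and>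
     foldr (\<lambda>F acc. mat_adjoint F * F + acc) Es (0\<^sub>m k k) = 1\<^sub>m k \<and>
     (\<forall>i < length Es. \<forall>j < length Es. \<forall>A \<in> S. mat_adjoint (Es ! i) * A * (Es ! j) \<in> T))"

end

theory Submission
  imports Defs
begin

(* If u is an orthogonal representation of G in C^d, the isometry F : e_a \<mapsto> e_a \<otimes> u_a
   (e_a \<otimes> e_p is the basis vector a * d + p of C^n \<otimes> C^d) compresses A \<otimes> I to the matrix
   with entries A_ab <u_a, u_b>. Its off-diagonal entries vanish: either a, b are adjacent and
   <u_a, u_b> = 0, or they are not and A_ab = 0 for A in \<widehat>G. Restricting F to any m \<le> n
   vertices thus gives \<Delta>_m \<le> \<widehat>G \<otimes> C_d; the disjoint cliques only serve to guarantee M d \<le> n. *)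

lemma mspan_induct [consumes 1, case_names zero add]:
  assumes "B \<in> mspan N X" "P (0\<^sub>m N N)"
    "\<And>c A acc. A \<in> X \<Longrightarrow> A \<in> carrier_mat N N \<Longrightarrow> P acc \<Longrightarrow> P (c \<cdot>\<^sub>m A + acc)"
  shows "P B"
proof -
  obtain cs where B: "B = foldr (\<lambda>(c, A) acc. c \<cdot>\<^sub>m A + acc) cs (0\<^sub>m N N)"
    and cs: "\<forall>(c, A) \<in> set cs. A \<in> X \<and> A \<in> carrier_mat N N"
    using assms(1) unfolding mspan_def by blast
  from cs have "P (foldr (\<lambda>(c, A) acc. c \<cdot>\<^sub>m A + acc) cs (0\<^sub>m N N))"
    by (induction cs) (auto intro: assms(3) simp: assms(2))
  with B show ?thesis by simp
qed

lemma mat_adjoint_index: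
  assumes "A \<in> carrier_mat nr nc" "i < nc" "j < nr"
  shows "mat_adjoint A $$ (i, j) = cnj (A $$ (j, i))"
  using assms unfolding mat_adjoint_def by (simp add: mat_of_rows_def)

lemma mat_adjoint_carrier:
  assumes "A \<in> carrier_mat nr nc"
  shows "mat_adjoint A \<in> carrier_mat nc nr"
  using assms unfolding mat_adjoint_def by (simp add: mat_of_rows_def)

lemma index_mult_mat_sum:
  assumes "A \<in> carrier_mat m k" "B \<in> carrier_mat k l" "i < m" "j < l"
  shows "(A * B) $$ (i, j) = (\<Sum>t<k. A $$ (i, t) * B $$ (t, j))"
  using assms by (auto simp: scalar_prod_def atLeast0LessThan intro!: sum.cong)

lemma sum_single_block:
  fixes f :: "nat \<Rightarrow> 'a::comm_monoid_add"
  assumes "a < n" "\<And>r. r < n * d \<Longrightarrow> r div d \<noteq> a \<Longrightarrow> f r = 0"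
  shows "(\<Sum>r<n * d. f r) = (\<Sum>p<d. f (a * d + p))"
proof -
  have "(\<Sum>r<n * d. f r) = (\<Sum>x<n. \<Sum>r\<in>{x * d..<x * d + d}. f r)"
    by (rule sum.nat_group[symmetric])
  also have "\<dots> = (\<Sum>x<n. if x = a then (\<Sum>r\<in>{a * d..<a * d + d}. f r) else 0)"
  proof (rule sum.cong[OF refl])
    fix x assume "x \<in> {..<n}"
    then have "x * d + d \<le> n * d"
      by (metis Suc_leI lessThan_iff mult_Suc mult_le_mono1 add.commute)
    moreover have "r div d = x" if "r \<in> {x * d..<x * d + d}" for r
      using that by (auto intro: div_nat_eqI simp: mult.commute)
    ultimately show "(\<Sum>r\<in>{x * d..<x * d + d}. f r) = (if x = a then (\<Sum>r\<in>{a * d..<a * d + d}. f r) else 0)"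
      using assms(2) by (auto intro!: sum.neutral)
  qed
  also have "\<dots> = (\<Sum>p<d. f (a * d + p))"
    using assms(1) by (simp add: sum.atLeastLessThan_shift_0 atLeast0LessThan add.commute)
  finally show ?thesis .
qed

definition graph_supported :: "nat \<Rightarrow> (nat \<Rightarrow> nat \<Rightarrow> bool) \<Rightarrow> complex mat set" where
  "graph_supported n E =
     {A \<in> carrier_mat n n. \<forall>i<n. \<forall>j<n. i \<noteq> j \<longrightarrow> \<not> E i j \<longrightarrow> A $$ (i, j) = 0}"

lemma graph_ncg_subset_supported: "graph_ncg n E \<subseteq> graph_supported n E"
proof
  fix A assume "A \<in> graph_ncg n E"
  then show "A \<in> graph_supported n E"
    unfolding graph_ncg_def
    by (induction rule: mspan_induct) (auto simp: graph_supported_def mat_unit_def)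
qed

lemma scalar_ncg_smult_one:
  assumes "B \<in> scalar_ncg d"
  shows "\<exists>c. B = c \<cdot>\<^sub>m 1\<^sub>m d"
  using assms unfolding scalar_ncg_def
proof (induction rule: mspan_induct)
  case zero
  have "0\<^sub>m d d = (0 :: complex) \<cdot>\<^sub>m 1\<^sub>m d" by (rule eq_matI) auto
  then show ?case ..
next
  case (add c A acc)
  then obtain b where "acc = b \<cdot>\<^sub>m 1\<^sub>m d" by blast
  with add.hyps have "c \<cdot>\<^sub>m A + acc = (c + b) \<cdot>\<^sub>m 1\<^sub>m d"
    by (simp add: add_smult_distrib_right_mat[of _ d d])
  then show ?case ..
qed

lemma ncg_tensor_scalar_ncg_kron_one:
  assumes "K \<in> ncg_tensor n d (graph_ncg n E) (scalar_ncg d)"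
  shows "\<exists>A\<in>graph_supported n E. K = kron A (1\<^sub>m d)"
  using assms unfolding ncg_tensor_def
proof (induction rule: mspan_induct)
  case zero
  have "0\<^sub>m (n * d) (n * d) = kron (0\<^sub>m n n) (1\<^sub>m d)"
    by (rule eq_matI) (auto simp: kron_def less_mult_imp_div_less)
  moreover have "0\<^sub>m n n \<in> graph_supported n E" by (simp add: graph_supported_def)
  ultimately show ?case ..
next
  case (add c K0 acc)
  then obtain A0 B A where A0: "A0 \<in> graph_supported n E" and B: "B \<in> scalar_ncg d"
    and K0: "K0 = kron A0 B" and A: "A \<in> graph_supported n E" and acc: "acc = kron A (1\<^sub>m d)"
    using graph_ncg_subset_supported by blast
  obtain b where b: "B = b \<cdot>\<^sub>m 1\<^sub>m d" using scalar_ncg_smult_one[OF B] by blast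
  have "i mod d < d" if "i < n * d" for i
    using that by (cases "d = 0") auto
  then have "c \<cdot>\<^sub>m K0 + acc = kron ((c * b) \<cdot>\<^sub>m A0 + A) (1\<^sub>m d)"
    using A0 A unfolding K0 acc b
    by (intro eq_matI) (auto simp: kron_def graph_supported_def less_mult_imp_div_less)
  moreover have "(c * b) \<cdot>\<^sub>m A0 + A \<in> graph_supported n E"
    using A0 A by (auto simp: graph_supported_def)
  ultimately show ?case ..
qed

definition vertex_embedding :: "nat \<Rightarrow> nat \<Rightarrow> nat \<Rightarrow> (nat \<Rightarrow> complex vec) \<Rightarrow> complex mat" where
  "vertex_embedding n d m u = mat (n * d) m (\<lambda>(r, a). if r div d = a then u a $ (r mod d) else 0)"

lemma vertex_embedding_carrier: "vertex_embedding n d m u \<in> carrier_mat (n * d) m"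
  unfolding vertex_embedding_def by simp

lemma block_index_less: "(a :: nat) < n \<Longrightarrow> p < d \<Longrightarrow> a * d + p < n * d"
  by (metis add.commute add_less_cancel_left less_le_trans mult_Suc Suc_leI mult_le_mono1)

lemma vertex_embedding_index:
  assumes "a < n" "b < m" "p < d"
  shows "vertex_embedding n d m u $$ (a * d + p, b) = (if a = b then u b $ p else 0)"
  using assms block_index_less[OF assms(1,3)] unfolding vertex_embedding_def by auto

lemma adjoint_vertex_embedding_mult_index:
  assumes "X \<in> carrier_mat (n * d) k" "a < m" "m \<le> n" "j < k"
  shows "(mat_adjoint (vertex_embedding n d m u) * X) $$ (a, j)
    = (\<Sum>p<d. cnj (u a $ p) * X $$ (a * d + p, j))"
proof -
  let ?F = "vertex_embedding n d m u"
  have "(mat_adjoint ?F * X) $$ (a, j) = (\<Sum>r<n * d. cnj (?F $$ (r, a)) * X $$ (r, j))"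
    using assms vertex_embedding_carrier[of n d m u]
    by (simp add: index_mult_mat_sum[OF mat_adjoint_carrier] mat_adjoint_index)
  also have "\<dots> = (\<Sum>p<d. cnj (?F $$ (a * d + p, a)) * X $$ (a * d + p, j))"
    using assms by (intro sum_single_block) (auto simp: vertex_embedding_def)
  also have "\<dots> = (\<Sum>p<d. cnj (u a $ p) * X $$ (a * d + p, j))"
    using assms by (simp add: vertex_embedding_index)
  finally show ?thesis .
qed

lemma kron_one_mult_vertex_embedding_index:
  assumes "A \<in> carrier_mat n n" "m \<le> n" "r < n * d" "b < m"
  shows "(kron A (1\<^sub>m d) * vertex_embedding n d m u) $$ (r, b) = A $$ (r div d, b) * u b $ (r mod d)"
proof -
  let ?F = "vertex_embedding n d m u"
  have K: "kron A (1\<^sub>m d) \<in> carrier_mat (n * d) (n * d)"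
    using assms(1) by (simp add: kron_def)
  have "(kron A (1\<^sub>m d) * ?F) $$ (r, b) = (\<Sum>s<n * d. kron A (1\<^sub>m d) $$ (r, s) * ?F $$ (s, b))"
    by (rule index_mult_mat_sum[OF K vertex_embedding_carrier assms(3,4)])
  also have "\<dots> = (\<Sum>q<d. kron A (1\<^sub>m d) $$ (r, b * d + q) * ?F $$ (b * d + q, b))"
    using assms by (intro sum_single_block) (auto simp: vertex_embedding_def)
  also have "\<dots> = (\<Sum>q<d. if q = r mod d then A $$ (r div d, b) * u b $ q else 0)"
    using assms block_index_less[of b n] by (intro sum.cong) (auto simp: kron_def vertex_embedding_index)
  also have "\<dots> = A $$ (r div d, b) * u b $ (r mod d)"
    using assms(3) by (cases "d = 0") auto
  finally show ?thesis .
qed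

lemma compress_kron_one_index:
  assumes "A \<in> carrier_mat n n" "m \<le> n" "a < m" "b < m" "u a \<in> carrier_vec d"
  shows "(mat_adjoint (vertex_embedding n d m u) * kron A (1\<^sub>m d) * vertex_embedding n d m u) $$ (a, b)
    = A $$ (a, b) * cinner (u a) (u b)"
proof -
  let ?F = "vertex_embedding n d m u"
  have K: "kron A (1\<^sub>m d) \<in> carrier_mat (n * d) (n * d)"
    using assms(1) by (simp add: kron_def)
  have "(mat_adjoint ?F * kron A (1\<^sub>m d) * ?F) $$ (a, b) = (mat_adjoint ?F * (kron A (1\<^sub>m d) * ?F)) $$ (a, b)"
    by (rule arg_cong[where f = "\<lambda>X. X $$ (a, b)"],
        rule assoc_mult_mat[OF mat_adjoint_carrier[OF vertex_embedding_carrier] K vertex_embedding_carrier])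
  also have "\<dots> = (\<Sum>p<d. cnj (u a $ p) * (A $$ (a, b) * u b $ p))"
    using assms block_index_less[of a n]
    by (simp add: adjoint_vertex_embedding_mult_index[OF mult_carrier_mat[OF K vertex_embedding_carrier]]
        kron_one_mult_vertex_embedding_index)
  also have "\<dots> = A $$ (a, b) * cinner (u a) (u b)"
    using assms(5) by (simp add: cinner_def sum_distrib_left mult_ac)
  finally show ?thesis .
qed

lemma kron_one_mat: "kron (1\<^sub>m n) (1\<^sub>m d) = 1\<^sub>m (n * d)"
proof (rule eq_matI)
  fix i j assume "i < dim_row (1\<^sub>m (n * d))" "j < dim_col (1\<^sub>m (n * d))"
  then have "i div d < n" "j div d < n" "0 < d"
    by (auto simp: less_mult_imp_div_less intro: gr0I)
  moreover have "(i div d = j div d \<and> i mod d = j mod d) \<longleftrightarrow> i = j"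
    by (metis div_mult_mod_eq)
  ultimately show "kron (1\<^sub>m n) (1\<^sub>m d) $$ (i, j) = 1\<^sub>m (n * d) $$ (i, j)"
    using \<open>i < dim_row _\<close> \<open>j < dim_col _\<close> by (auto simp: kron_def)
qed (auto simp: kron_def)

lemma vertex_embedding_isometry:
  assumes "orth_rep n E d u" "m \<le> n"
  shows "mat_adjoint (vertex_embedding n d m u) * vertex_embedding n d m u = 1\<^sub>m m"
proof (rule eq_matI)
  let ?F = "vertex_embedding n d m u"
  fix a b assume "a < dim_row (1\<^sub>m m)" "b < dim_col (1\<^sub>m m)"
  then have ab: "a < m" "b < m" by auto
  have "mat_adjoint ?F * ?F = mat_adjoint ?F * kron (1\<^sub>m n) (1\<^sub>m d) * ?F"
    by (simp add: kron_one_mat right_mult_one_mat[OF mat_adjoint_carrier[OF vertex_embedding_carrier]])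
  also have "\<dots> $$ (a, b) = 1\<^sub>m n $$ (a, b) * cinner (u a) (u b)"
    using assms ab by (intro compress_kron_one_index) (auto simp: orth_rep_def)
  also have "\<dots> = 1\<^sub>m m $$ (a, b)"
    using assms ab by (auto simp: orth_rep_def)
  finally show "(mat_adjoint ?F * ?F) $$ (a, b) = 1\<^sub>m m $$ (a, b)" .
qed (auto simp: mat_adjoint_def mat_of_rows_def vertex_embedding_def)

lemma compress_tensor_scalar_diagonal:
  assumes "orth_rep n E d u" "m \<le> n" "K \<in> ncg_tensor n d (graph_ncg n E) (scalar_ncg d)"
  shows "mat_adjoint (vertex_embedding n d m u) * K * vertex_embedding n d m u \<in> diag_ncg m"
proof -
  let ?F = "vertex_embedding n d m u"
  obtain A where A: "A \<in> graph_supported n E" and K: "K = kron A (1\<^sub>m d)"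
    using ncg_tensor_scalar_ncg_kron_one[OF assms(3)] by blast
  have "(mat_adjoint ?F * K * ?F) $$ (a, b) = 0" if "a < m" "b < m" "a \<noteq> b" for a b
  proof -
    have "(mat_adjoint ?F * K * ?F) $$ (a, b) = A $$ (a, b) * cinner (u a) (u b)"
      using assms that A unfolding K
      by (intro compress_kron_one_index) (auto simp: graph_supported_def orth_rep_def)
    also have "\<dots> = 0"
      using assms that A by (cases "E a b") (auto simp: graph_supported_def orth_rep_def)
    finally show ?thesis .
  qed
  moreover have "mat_adjoint ?F * K * ?F \<in> carrier_mat m m"
    using A unfolding K
    by (auto simp: graph_supported_def kron_def mat_adjoint_def mat_of_rows_def vertex_embedding_def)
  ultimately show ?thesis by (simp add: diag_ncg_def)
qed

lemma diag_ncg_le_tensor_scalar_ncg: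
  assumes "orth_rep n E d u" "m \<le> n"
  shows "ncg_le m (diag_ncg m) (n * d) (ncg_tensor n d (graph_ncg n E) (scalar_ncg d))"
  unfolding ncg_le_def
  using assms vertex_embedding_carrier vertex_embedding_isometry compress_tensor_scalar_diagonal
  by (intro exI[of _ "[vertex_embedding n d m u]"]) auto

lemma orth_rep_unit_vec:
  assumes "\<forall>x<n. \<not> E x x"
  shows "orth_rep n E n (unit_vec n)"
proof -
  have "cinner (unit_vec n x) (unit_vec n y) = (if x = y then 1 else 0)" if "x < n" "y < n" for x y
  proof -
    have "cinner (unit_vec n x) (unit_vec n y) = (\<Sum>i<n. if i = x then (if x = y then 1 else 0) else 0)"
      unfolding cinner_def by (intro sum.cong) (auto simp: unit_vec_def)
    with that show ?thesis by simp
  qed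
  with assms show ?thesis
    by (auto simp: orth_rep_def)
qed

lemma orth_rep_pad:
  assumes "orth_rep n E d0 u" "d0 \<le> d"
  shows "orth_rep n E d (\<lambda>x. vec d (\<lambda>i. if i < d0 then u x $ i else 0))"
proof -
  let ?v = "\<lambda>x. vec d (\<lambda>i. if i < d0 then u x $ i else 0)"
  have "cinner (?v x) (?v y) = cinner (u x) (u y)" if "x < n" for x y
  proof -
    have "cinner (?v x) (?v y) = (\<Sum>i<d. if i < d0 then cnj (u x $ i) * u y $ i else 0)"
      unfolding cinner_def by (intro sum.cong) auto
    also have "\<dots> = (\<Sum>i\<in>{i\<in>{..<d}. i < d0}. cnj (u x $ i) * u y $ i)"
      by (rule sum.inter_filter[symmetric]) simp
    also have "{i\<in>{..<d}. i < d0} = {..<d0}" using assms(2) by auto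
    moreover have "dim_vec (u x) = d0"
      using assms(1) that by (simp add: orth_rep_def)
    ultimately show ?thesis
      by (simp add: cinner_def)
  qed
  with assms(1) show ?thesis
    by (simp add: orth_rep_def)
qed

lemma orth_rep_if_orth_rank_le:
  assumes "simple_graph n E" "orth_rank n E \<le> d"
  shows "\<exists>u. orth_rep n E d u"
proof -
  have unit: "orth_rep n E n (unit_vec n)"
    using assms(1) by (intro orth_rep_unit_vec) (simp add: simple_graph_def)
  have "\<exists>u. orth_rep n E (orth_rank n E) u"
    unfolding orth_rank_def by (rule LeastI_ex) (use unit in blast)
  with assms(2) show ?thesis
    using orth_rep_pad by blast
qed

lemma disjoint_family_card_le:
  assumes "finite V" "\<forall>i<M. C i \<subseteq> V \<and> card (C i) = d"
    and "\<forall>i<M. \<forall>j<M. i \<noteq> j \<longrightarrow> C i \<inter> C j = {}"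
  shows "M * d \<le> card V"
proof -
  have "M * d = card (\<Union>i<M. C i)"
    using assms by (subst card_UN_disjoint) (auto intro: finite_subset)
  also have "\<dots> \<le> card V"
    using assms by (intro card_mono) auto
  finally show ?thesis .
qed

theorem lemma3p9:
  fixes n d M :: nat and E :: "nat \<Rightarrow> nat \<Rightarrow> bool" and C :: "nat \<Rightarrow> nat set"
  assumes "simple_graph n E"
    and "0 < d" and "0 < M"
    and "orth_rank n E \<le> d"
    and "\<forall>i<M. C i \<subseteq> {..<n} \<and> card (C i) = d \<and>
              (\<forall>x\<in>C i. \<forall>y\<in>C i. x \<noteq> y \<longrightarrow> E x y)"
    and "\<forall>i<M. \<forall>j<M. i \<noteq> j \<longrightarrow> C i \<inter> C j = {}"
  shows "ncg_le (M * d) (diag_ncg (M * d)) (n * d) (ncg_tensor n d (graph_ncg n E) (scalar_ncg d))"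
proof -
  obtain u where "orth_rep n E d u"
    using orth_rep_if_orth_rank_le[OF assms(1,4)] by blast
  moreover have "M * d \<le> n"
    using disjoint_family_card_le[of "{..<n}" M C d] assms(5,6) by auto
  ultimately show ?thesis
    by (rule diag_ncg_le_tensor_scalar_ncg)
qed

end
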